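(* Fix a constant $c>0$. Then \[ \lim_{\ell\to\infty}2^{-\ell}\sum_{j=1}^{\ell}\binom{\ell}{j}\frac{1}{1-\left(1-\frac{2c}{\ell}\right)^j}=\frac{1}{1-e^{-c}}. \]
   Context: The sum is over integers $j$; the limit is over integers $\ell\to\infty$ (for $\ell>c$ all denominators are nonzero). In view of the preceding hitting-time formula, $2^\ell$ times this quantity is the expected time for the bitwise-mutation random walk with rate $c/\ell$ (equivalently, the (1+1) EA with mutation rate $c/\ell$ on the Needle function of length $\ell$) started uniformly to hit the all-ones string. *)

theory Defs
  imports "HOL-Analysis.Analysis"
begin

end

theory Submission
  imports Defs "HOL-Real_Asymp.Real_Asymp"
begin

text \<open>
  Under the weights 2^-l (l choose j) the index j has variance l/4, so by Chebyshev it lies in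
  the window l/2 \<plusminus> D up to mass l/(4 D^2); with D = l^(3/4) this vanishes, while
  (1 - 2c/l)^(l/2 \<plusminus> D) tends to exp (-c). Since 1/(1 - q^j) decreases in j, this bounds the terms
  with j \<ge> l/2 - D from above and those with j \<le> l/2 + D from below. The terms with small j are large,
  but 1/(1 - q^j) \<le> 1 + 1/(j (1 - q)), and the factor 1/j is absorbed into the binomial
  coefficient, (l choose j)/j \<le> 2 (l+1 choose j+1)/(l+1), so Chebyshev applies once more to
  the shifted row and these terms contribute O(l/D^2) after normalisation.
\<close>

lemma sum_choose_real: "(\<Sum>i\<le>n. real (n choose i)) = 2 ^ n"
  by (metis choose_row_sum of_nat_numeral of_nat_power of_nat_sum)

lemma sum_linear_choose_real: "(\<Sum>i\<le>n. real i * real (n choose i)) = real n * 2 ^ n / 2"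
proof -
  have "(\<Sum>i\<le>n. real i * real (n choose i)) = real (n * 2 ^ (n - 1))"
    by (simp only: choose_linear_sum flip: of_nat_mult of_nat_sum)
  also have "\<dots> = real n * 2 ^ n / 2"
    by (cases n) (auto simp: algebra_simps)
  finally show ?thesis .
qed

lemma sum_square_choose_real:
  "(\<Sum>i\<le>n. (real i)\<^sup>2 * real (n choose i)) = real n * (real n + 1) * 2 ^ n / 4"
proof (cases n)
  case 0
  then show ?thesis by simp
next
  case (Suc m)
  have absorb: "real (Suc k) * real (Suc m choose Suc k) = real (Suc m) * real (m choose k)" for k
    by (simp only: Suc_times_binomial flip: of_nat_mult)
  have "(\<Sum>i\<le>Suc m. (real i)\<^sup>2 * real (Suc m choose i))
      = (\<Sum>k\<le>m. real (Suc k) * (real (Suc k) * real (Suc m choose Suc k)))"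
    by (subst sum.atMost_Suc_shift) (simp add: power2_eq_square mult.assoc del: binomial_Suc_Suc of_nat_Suc)
  also have "\<dots> = real (Suc m) * ((\<Sum>k\<le>m. real k * real (m choose k)) + (\<Sum>k\<le>m. real (m choose k)))"
    by (simp only: absorb) (simp add: sum_distrib_left sum.distrib algebra_simps del: binomial_Suc_Suc)
  also have "\<dots> = real (Suc m) * (real (Suc m) + 1) * 2 ^ Suc m / 4"
    by (simp add: sum_linear_choose_real sum_choose_real field_simps)
  finally show ?thesis
    using Suc by simp
qed

lemma sum_choose_centered_square:
  "(\<Sum>i\<le>n. real (n choose i) * (real i - real n / 2)\<^sup>2) = real n * 2 ^ n / 4"
proof -
  have "(\<Sum>i\<le>n. real (n choose i) * (real i - real n / 2)\<^sup>2)
      = (\<Sum>i\<le>n. (real i)\<^sup>2 * real (n choose i)) - real n * (\<Sum>i\<le>n. real i * real (n choose i))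
        + (real n)\<^sup>2 / 4 * (\<Sum>i\<le>n. real (n choose i))"
    by (simp add: sum_subtractf sum.distrib sum_distrib_left power2_eq_square algebra_simps)
  also have "\<dots> = real n * 2 ^ n / 4"
    by (simp only: sum_square_choose_real sum_linear_choose_real sum_choose_real)
      (simp add: power2_eq_square field_simps)
  finally show ?thesis .
qed

lemma sum_choose_far_from_middle_le:
  assumes "d > 0"
  shows "(\<Sum>j | j \<le> n \<and> d \<le> \<bar>real j - real n / 2\<bar>. real (n choose j)) \<le> real n * 2 ^ n / (4 * d\<^sup>2)"
proof -
  let ?far = "{j. j \<le> n \<and> d \<le> \<bar>real j - real n / 2\<bar>}"
  have "(\<Sum>j\<in>?far. real (n choose j)) \<le> (\<Sum>j\<in>?far. real (n choose j) * (real j - real n / 2)\<^sup>2 / d\<^sup>2)"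
  proof (rule sum_mono)
    fix j
    assume "j \<in> ?far"
    then have "d\<^sup>2 \<le> (real j - real n / 2)\<^sup>2"
      using assms by (metis abs_le_square_iff abs_of_pos mem_Collect_eq)
    then show "real (n choose j) \<le> real (n choose j) * (real j - real n / 2)\<^sup>2 / d\<^sup>2"
      using assms by (simp add: field_simps mult_left_mono)
  qed
  also have "\<dots> \<le> (\<Sum>j\<le>n. real (n choose j) * (real j - real n / 2)\<^sup>2 / d\<^sup>2)"
    by (rule sum_mono2) auto
  also have "\<dots> = real n * 2 ^ n / (4 * d\<^sup>2)"
    by (simp only: sum_divide_distrib [symmetric] sum_choose_centered_square)
  finally show ?thesis .
qed

lemma inverse_one_minus_powr_antimono:
  fixes q x y :: real
  assumes "0 < q" "q < 1" "0 < x" "x \<le> y"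
  shows "1 / (1 - q powr y) \<le> 1 / (1 - q powr x)"
proof -
  have "q powr y \<le> q powr x"
    using assms by (intro powr_mono') auto
  moreover have "q powr x < 1"
    using assms by (simp add: powr01_less_one)
  ultimately show ?thesis
    by (intro divide_left_mono) auto
qed

text \<open>Since 1 - q^j = (1 - q) (\<Sum>i<j. q^i) \<ge> (1 - q) j q^j.\<close>

lemma inverse_one_minus_power_le:
  fixes q :: real
  assumes q: "0 < q" "q < 1" and j: "1 \<le> j"
  shows "1 / (1 - q ^ j) \<le> 1 + 1 / (real j * (1 - q))"
proof -
  have "real j * q ^ j = (\<Sum>i<j. q ^ j)"
    by simp
  also have "\<dots> \<le> (\<Sum>i<j. q ^ i)"
    using q by (intro sum_mono power_decreasing) auto
  finally have "(1 - q) * (real j * q ^ j) \<le> 1 - q ^ j"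
    using q by (simp add: one_diff_power_eq mult_left_mono)
  moreover have "0 < (1 - q) * (real j * q ^ j)"
    using q j by simp
  ultimately have "q ^ j / (1 - q ^ j) \<le> q ^ j / ((1 - q) * (real j * q ^ j))"
    using q by (intro divide_left_mono) auto
  moreover have "1 / (1 - q ^ j) = 1 + q ^ j / (1 - q ^ j)"
    using q j power_less_one_iff[of q j] by (simp add: field_simps)
  ultimately show ?thesis
    using q by (simp add: mult.commute)
qed

lemma choose_div_le_Suc_choose:
  assumes "1 \<le> j"
  shows "real (l choose j) / real j \<le> 2 * real (Suc l choose Suc j) / real (Suc l)"
proof -
  have "real (Suc j) * real (Suc l choose Suc j) = real (Suc l) * real (l choose j)"
    by (simp only: Suc_times_binomial flip: of_nat_mult)
  then have "real (l choose j) / real j = (real (Suc j) / real j) * (real (Suc l choose Suc j) / real (Suc l))"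
    by (simp add: field_simps del: binomial_Suc_Suc of_nat_Suc)
  also have "\<dots> \<le> 2 * (real (Suc l choose Suc j) / real (Suc l))"
    using assms by (intro mult_right_mono) (auto simp: field_simps)
  finally show ?thesis
    by simp
qed

text \<open>
  For q = 1 - 2c/l this is the expected time for the (1+1) EA with mutation rate c/l,
  started uniformly on {0,1}^l, to hit the needle.
\<close>

definition needle_sum :: "nat \<Rightarrow> real \<Rightarrow> real" where
  "needle_sum l q = (\<Sum>j = 1..l. real (l choose j) / (1 - q ^ j))"

lemma needle_term_le:
  fixes q :: real
  assumes q: "0 < q" "q < 1" and j: "1 \<le> j"
  shows "real (l choose j) / (1 - q ^ j)
    \<le> real (l choose j) + 2 * real (Suc l choose Suc j) / (real (Suc l) * (1 - q))"
proof -
  have "real (l choose j) / (1 - q ^ j) \<le> real (l choose j) * (1 + 1 / (real j * (1 - q)))"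
    using inverse_one_minus_power_le [OF q j] by (simp add: divide_inverse mult_left_mono)
  also have "\<dots> = real (l choose j) + real (l choose j) / real j / (1 - q)"
    by (simp add: field_simps)
  also have "\<dots> \<le> real (l choose j) + 2 * real (Suc l choose Suc j) / real (Suc l) / (1 - q)"
    using q by (intro add_left_mono divide_right_mono choose_div_le_Suc_choose j) auto
  finally show ?thesis
    by simp
qed

lemma sum_needle_terms_above_le:
  fixes q A :: real
  assumes q: "0 < q" "q < 1" and A: "0 < A"
  shows "(\<Sum>j\<in>{j\<in>{1..l}. A \<le> real j}. real (l choose j) / (1 - q ^ j)) \<le> 2 ^ l / (1 - q powr A)"
proof -
  have "(\<Sum>j\<in>{j\<in>{1..l}. A \<le> real j}. real (l choose j) / (1 - q ^ j))
      \<le> (\<Sum>j\<in>{j\<in>{1..l}. A \<le> real j}. real (l choose j) / (1 - q powr A))"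
  proof (rule sum_mono)
    fix j
    assume "j \<in> {j\<in>{1..l}. A \<le> real j}"
    then have "1 / (1 - q powr real j) \<le> 1 / (1 - q powr A)"
      using q A by (intro inverse_one_minus_powr_antimono) auto
    then show "real (l choose j) / (1 - q ^ j) \<le> real (l choose j) / (1 - q powr A)"
      using q by (simp add: powr_realpow divide_inverse mult_left_mono)
  qed
  also have "\<dots> \<le> (\<Sum>j\<le>l. real (l choose j)) / (1 - q powr A)"
    using q A powr01_less_one [of q A]
    by (auto simp: sum_divide_distrib [symmetric] intro!: divide_right_mono sum_mono2)
  finally show ?thesis
    by (simp only: sum_choose_real)
qed

lemma sum_needle_terms_below_le:
  fixes q D :: real
  assumes q: "0 < q" "q < 1" and D: "1/2 < D"
  shows "(\<Sum>j\<in>{j\<in>{1..l}. real j < real l / 2 - D}. real (l choose j) / (1 - q ^ j))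
    \<le> 2 ^ l * (real l / (4 * D\<^sup>2) + 1 / ((1 - q) * (D - 1/2)\<^sup>2))"
proof -
  define P where "P = {j\<in>{1..l}. real j < real l / 2 - D}"
  have "(\<Sum>j\<in>P. real (l choose j)) \<le> (\<Sum>j | j \<le> l \<and> D \<le> \<bar>real j - real l / 2\<bar>. real (l choose j))"
    by (rule sum_mono2) (auto simp: P_def)
  also have "\<dots> \<le> real l * 2 ^ l / (4 * D\<^sup>2)"
    using D by (intro sum_choose_far_from_middle_le) auto
  finally have near: "(\<Sum>j\<in>P. real (l choose j)) \<le> real l * 2 ^ l / (4 * D\<^sup>2)" .
  have "(\<Sum>j\<in>P. real (Suc l choose Suc j)) = (\<Sum>i\<in>Suc ` P. real (Suc l choose i))"
    by (simp add: sum.reindex del: binomial_Suc_Suc)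
  also have "\<dots> \<le> (\<Sum>i | i \<le> Suc l \<and> D - 1/2 \<le> \<bar>real i - real (Suc l) / 2\<bar>. real (Suc l choose i))"
    by (rule sum_mono2) (auto simp: P_def abs_if field_simps)
  also have "\<dots> \<le> real (Suc l) * 2 ^ Suc l / (4 * (D - 1/2)\<^sup>2)"
    using D by (intro sum_choose_far_from_middle_le) auto
  finally have shifted: "(\<Sum>j\<in>P. real (Suc l choose Suc j)) \<le> real (Suc l) * 2 ^ Suc l / (4 * (D - 1/2)\<^sup>2)" .
  have "(\<Sum>j\<in>P. real (l choose j) / (1 - q ^ j))
      \<le> (\<Sum>j\<in>P. real (l choose j) + 2 * real (Suc l choose Suc j) / (real (Suc l) * (1 - q)))"
    using q by (intro sum_mono needle_term_le) (auto simp: P_def)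
  also have "\<dots> = (\<Sum>j\<in>P. real (l choose j)) + 2 / (real (Suc l) * (1 - q)) * (\<Sum>j\<in>P. real (Suc l choose Suc j))"
    by (simp add: sum.distrib sum_distrib_left del: binomial_Suc_Suc of_nat_Suc)
  also have "\<dots> \<le> real l * 2 ^ l / (4 * D\<^sup>2)
      + 2 / (real (Suc l) * (1 - q)) * (real (Suc l) * 2 ^ Suc l / (4 * (D - 1/2)\<^sup>2))"
    using q by (intro add_mono near mult_left_mono shifted) auto
  also have "\<dots> = 2 ^ l * (real l / (4 * D\<^sup>2) + 1 / ((1 - q) * (D - 1/2)\<^sup>2))"
    using q D by (simp add: field_simps del: of_nat_Suc)
  finally show ?thesis
    unfolding P_def .
qed

lemma needle_sum_upper_bound:
  fixes q D :: real
  assumes q: "0 < q" "q < 1" and D: "1/2 < D" "D < real l / 2"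
  shows "needle_sum l q / 2 ^ l
    \<le> 1 / (1 - q powr (real l / 2 - D)) + real l / (4 * D\<^sup>2) + 1 / ((1 - q) * (D - 1/2)\<^sup>2)"
proof -
  define P where "P = {j\<in>{1..l}. real j < real l / 2 - D}"
  define Q where "Q = {j\<in>{1..l}. real l / 2 - D \<le> real j}"
  have "needle_sum l q = (\<Sum>j\<in>P \<union> Q. real (l choose j) / (1 - q ^ j))"
    unfolding needle_sum_def by (rule sum.cong) (auto simp: P_def Q_def)
  also have "\<dots> = (\<Sum>j\<in>P. real (l choose j) / (1 - q ^ j)) + (\<Sum>j\<in>Q. real (l choose j) / (1 - q ^ j))"
    by (rule sum.union_disjoint) (auto simp: P_def Q_def)
  also have "\<dots> \<le> 2 ^ l * (real l / (4 * D\<^sup>2) + 1 / ((1 - q) * (D - 1/2)\<^sup>2))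
      + 2 ^ l / (1 - q powr (real l / 2 - D))"
    unfolding P_def Q_def using q D by (intro add_mono sum_needle_terms_below_le sum_needle_terms_above_le) auto
  finally show ?thesis
    by (simp add: divide_le_eq algebra_simps)
qed

lemma sum_choose_up_to_middle_plus_ge:
  assumes "0 < D"
  shows "2 ^ l - 1 - real l * 2 ^ l / (4 * D\<^sup>2) \<le> (\<Sum>j\<in>{j\<in>{1..l}. real j \<le> real l / 2 + D}. real (l choose j))"
proof -
  define R where "R = {j\<in>{1..l}. real j \<le> real l / 2 + D}"
  define T where "T = {j. j \<le> l \<and> real l / 2 + D < real j}"
  have "{..l} = insert 0 (R \<union> T)" "0 \<notin> R \<union> T" "R \<inter> T = {}" "finite R" "finite T"
    using assms by (auto simp: R_def T_def)
  then have "(2::real) ^ l = 1 + (\<Sum>j\<in>R. real (l choose j)) + (\<Sum>j\<in>T. real (l choose j))"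
    by (simp add: sum_choose_real [symmetric] sum.union_disjoint)
  moreover have "(\<Sum>j\<in>T. real (l choose j)) \<le> (\<Sum>j | j \<le> l \<and> D \<le> \<bar>real j - real l / 2\<bar>. real (l choose j))"
    by (rule sum_mono2) (auto simp: T_def)
  moreover have "\<dots> \<le> real l * 2 ^ l / (4 * D\<^sup>2)"
    using assms by (rule sum_choose_far_from_middle_le)
  ultimately show ?thesis
    unfolding R_def by linarith
qed

lemma needle_sum_lower_bound:
  fixes q D :: real
  assumes q: "0 < q" "q < 1" and D: "0 < D"
  shows "(1 - real l / (4 * D\<^sup>2) - 1 / 2 ^ l) / (1 - q powr (real l / 2 + D)) \<le> needle_sum l q / 2 ^ l"
proof -
  define B where "B = real l / 2 + D"
  define R where "R = {j\<in>{1..l}. real j \<le> B}"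
  have qB: "q powr B < 1"
    using q D by (simp add: B_def powr01_less_one)
  have "(1 - real l / (4 * D\<^sup>2) - 1 / 2 ^ l) * 2 ^ l \<le> (\<Sum>j\<in>R. real (l choose j))"
    using sum_choose_up_to_middle_plus_ge [OF D, of l] by (simp add: R_def B_def algebra_simps)
  then have "(1 - real l / (4 * D\<^sup>2) - 1 / 2 ^ l) / (1 - q powr B) * 2 ^ l
      \<le> (\<Sum>j\<in>R. real (l choose j) / (1 - q powr B))"
    using qB by (simp add: sum_divide_distrib [symmetric] divide_right_mono)
  also have "\<dots> \<le> (\<Sum>j\<in>R. real (l choose j) / (1 - q ^ j))"
  proof (rule sum_mono)
    fix j
    assume "j \<in> R"
    then have "1 / (1 - q powr B) \<le> 1 / (1 - q powr real j)"
      using q by (intro inverse_one_minus_powr_antimono) (auto simp: R_def)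
    then show "real (l choose j) / (1 - q powr B) \<le> real (l choose j) / (1 - q ^ j)"
      using q by (simp add: powr_realpow divide_inverse mult_left_mono)
  qed
  also have "\<dots> \<le> needle_sum l q"
    unfolding needle_sum_def R_def
    using q by (intro sum_mono2) (auto simp: power_less_one_iff less_imp_le)
  finally show ?thesis
    by (simp add: B_def le_divide_eq)
qed

theorem mainTheorem4:
  fixes c :: real
  assumes "c > 0"
  shows "(\<lambda>l::nat. (1 / 2 ^ l) * (\<Sum>j = 1..l. real (l choose j) *
            (1 / (1 - (1 - 2 * c / real l) ^ j))))
         \<longlonglongrightarrow> 1 / (1 - exp (- c))"
proof -
  define q where "q l = 1 - 2 * c / real l" for l :: nat
  \<comment> \<open>sqrt l << D l << l: the window carries almost all the mass, yet q l ^ (l/2 \<plusminus> D l) \<longrightarrow> exp (-c).\<close>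
  define D where "D l = real l powr (3/4)" for l :: nat
  define lower where "lower l = (1 - real l / (4 * (D l)\<^sup>2) - 1 / 2 ^ l) / (1 - q l powr (real l / 2 + D l))" for l
  define upper where "upper l = 1 / (1 - q l powr (real l / 2 - D l)) + real l / (4 * (D l)\<^sup>2)
      + 1 / ((1 - q l) * (D l - 1/2)\<^sup>2)" for l
  have "eventually (\<lambda>l. 0 < q l \<and> q l < 1 \<and> 1/2 < D l \<and> D l < real l / 2) sequentially"
    unfolding q_def D_def using assms by (intro eventually_conj) real_asymp+
  then have "eventually (\<lambda>l. lower l \<le> needle_sum l (q l) / 2 ^ l) sequentially"
    "eventually (\<lambda>l. needle_sum l (q l) / 2 ^ l \<le> upper l) sequentially"
    unfolding lower_def upper_def
    by (eventually_elim, simp add: needle_sum_lower_bound needle_sum_upper_bound)+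
  moreover have "lower \<longlonglongrightarrow> inverse (1 - exp (- c))"
    unfolding lower_def q_def D_def using assms by real_asymp
  moreover have "upper \<longlonglongrightarrow> inverse (1 - exp (- c))"
    unfolding upper_def q_def D_def using assms by real_asymp
  ultimately have "(\<lambda>l. needle_sum l (q l) / 2 ^ l) \<longlonglongrightarrow> inverse (1 - exp (- c))"
    by (rule tendsto_sandwich)
  moreover have "needle_sum l (q l) / 2 ^ l = (1 / 2 ^ l) * (\<Sum>j = 1..l. real (l choose j) *
            (1 / (1 - (1 - 2 * c / real l) ^ j)))" for l
    by (simp add: needle_sum_def q_def)
  ultimately show ?thesis
    by (simp add: inverse_eq_divide)
qed

end
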